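(* Let $C$ be a smooth non-hyperelliptic genus $4$ curve, let $S$ be the associated K3 surface with order-$3$ deck transformation $\sigma$, and let $M,N\subset H^2(S,\mathbb{Z})$ and $\eta$ be as below. Then for every automorphism $\zeta$ of the lattice $N$, exactly one of $\zeta,-\zeta$ is the restriction of an automorphism of $H^2(S,\mathbb{Z})$ that fixes $\eta$.
   Context: $C$ is canonically embedded in $\mathbb{P}^3$ as $Q\cap K$, where $Q$ is a quadric (smooth or with one node) and $K$ a cubic surface. $S$ is the K3 surface that is the triple cyclic cover of $Q$ (of its minimal resolution if $Q$ is singular) branched along $C$, and $\sigma$ is a generator of the deck group. $M=H^2(S,\mathbb{Z})^{\sigma^*}$ is isometric to $U(3)$, where $U$ is the hyperbolic plane with basis $x_1,x_2$, $x_i^2=0$, $x_1x_2=1$, and $U(3)$ means the form scaled by $3$. $\eta\in M$ is the class corresponding to $x_1+x_2$, the pullback of the hyperplane class of $Q$. $N=M^\perp$ has rank $20$. Lattice automorphisms are isometries. *)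

theory Defs
  imports Main
begin

text \<open>The K3 lattice U^3 + E8(-1)^2, realised on Z^22.  Vectors are functions
  nat => int supported on {..<22}; coordinates 0..5 are three hyperbolic planes U,
  coordinates 6..13 and 14..21 are two copies of E8(-1) (simple-root bases).\<close>

type_synonym zvec = "nat \<Rightarrow> int"

definition K3vecs :: "zvec set" where
  "K3vecs = {v. \<forall>i\<ge>22. v i = 0}"

definition vadd :: "zvec \<Rightarrow> zvec \<Rightarrow> zvec" where
  "vadd v w = (\<lambda>i. v i + w i)"

definition vneg :: "zvec \<Rightarrow> zvec" where
  "vneg v = (\<lambda>i. - v i)"

definition vsmul :: "int \<Rightarrow> zvec \<Rightarrow> zvec" where
  "vsmul n v = (\<lambda>i. n * v i)"

definition e8_edge :: "nat \<Rightarrow> nat \<Rightarrow> bool" where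
  "e8_edge a b = ({a, b} \<in> {{0,2},{2,3},{3,4},{4,5},{5,6},{6,7},{1,3}})"

definition e8neg :: "nat \<Rightarrow> nat \<Rightarrow> int" where
  "e8neg a b = (if a = b then -2 else if e8_edge a b then 1 else 0)"

definition K3gram :: "nat \<Rightarrow> nat \<Rightarrow> int" where
  "K3gram i j =
     (if i < 6 \<and> j < 6 then (if i div 2 = j div 2 \<and> i \<noteq> j then 1 else 0)
      else if 6 \<le> i \<and> i < 14 \<and> 6 \<le> j \<and> j < 14 then e8neg (i - 6) (j - 6)
      else if 14 \<le> i \<and> i < 22 \<and> 14 \<le> j \<and> j < 22 then e8neg (i - 14) (j - 14)
      else 0)"

definition K3form :: "zvec \<Rightarrow> zvec \<Rightarrow> int" where
  "K3form v w = (\<Sum>i<22. \<Sum>j<22. K3gram i j * v i * w j)"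

definition is_isometry :: "zvec set \<Rightarrow> (zvec \<Rightarrow> zvec) \<Rightarrow> bool" where
  "is_isometry A f \<longleftrightarrow> bij_betw f A A \<and>
     (\<forall>v\<in>A. \<forall>w\<in>A. f (vadd v w) = vadd (f v) (f w) \<and> K3form (f v) (f w) = K3form v w)"

definition span2 :: "zvec \<Rightarrow> zvec \<Rightarrow> zvec set" where
  "span2 x y = {vadd (vsmul a x) (vsmul b y) | a b. True}"

definition primitive_in_K3 :: "zvec set \<Rightarrow> bool" where
  "primitive_in_K3 M \<longleftrightarrow> (\<forall>v\<in>K3vecs. \<forall>n::int. n \<noteq> 0 \<and> vsmul n v \<in> M \<longrightarrow> v \<in> M)"

definition orth2 :: "zvec \<Rightarrow> zvec \<Rightarrow> zvec set" where
  "orth2 x y = {v \<in> K3vecs. K3form v x = 0 \<and> K3form v y = 0}"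

definition extends_fixing :: "zvec set \<Rightarrow> zvec \<Rightarrow> (zvec \<Rightarrow> zvec) \<Rightarrow> bool" where
  "extends_fixing N eta \<zeta> \<longleftrightarrow>
     (\<exists>g. is_isometry K3vecs g \<and> g eta = eta \<and> (\<forall>v\<in>N. g v = \<zeta> v))"

end

theory Submission
  imports Defs "HOL-Library.Function_Algebras"
begin

text \<open>The K3 lattice L is unimodular and M = U(3) is primitive, so L is obtained from
  M \<oplus> N, where N is the orthogonal complement of M, by gluing the discriminant groups A_M
  and A_N, both isomorphic to (Z/3)^2.  An isometry of N therefore extends to L fixing
  eta = x1 + x2 exactly when the isometry it induces on A_N corresponds under the gluing to that
  of an isometry tau of M fixing eta, i.e. the identity or the swap of x1 and x2.  The isometries
  of the discriminant form of U(3) are plus or minus a diagonal or an antidiagonal matrix, so for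
  some sign e the map e zeta induces one of these, and its extension is
  v \<mapsto> (tau (p_M v) + e zeta (p_N v)) / 3, where p_M and p_N are three times the orthogonal
  projections.  Conversely, extensions g of zeta and h of -zeta would satisfy
  3 (g w + h w) = g x2 + h x2 \<in> M for any w with (w, x1) = 1 and (w, x2) = 0; by primitivity
  g w + h w \<in> M, so its pairing with eta would be divisible by 3, but it is 2.\<close>

lemma vadd_eq_plus [simp]: "vadd v w = v + w" by (rule ext) (simp add: vadd_def)
lemma vneg_eq_uminus [simp]: "vneg v = - v" by (rule ext) (simp add: vneg_def)
lemma of_int_fun_apply [simp]: "(of_int k :: zvec) i = k"
  by (cases k) (simp_all add: of_nat_fun)
lemma vsmul_eq_mult [simp]: "vsmul k v = of_int k * v" by (rule ext) (simp add: vsmul_def)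

lemma K3gram_commute: "K3gram i j = K3gram j i"
  by (auto simp: K3gram_def e8neg_def e8_edge_def insert_commute)

lemma K3form_commute: "K3form v w = K3form w v"
  unfolding K3form_def by (subst sum.swap) (simp add: K3gram_commute mult_ac)

lemma K3form_add_left [simp]: "K3form (v + w) u = K3form v u + K3form w u"
  by (simp add: K3form_def algebra_simps sum.distrib)
lemma K3form_add_right [simp]: "K3form u (v + w) = K3form u v + K3form u w"
  by (simp add: K3form_def algebra_simps sum.distrib)
lemma K3form_of_int_left [simp]: "K3form (of_int k * v) u = k * K3form v u"
  by (simp add: K3form_def sum_distrib_left mult_ac)
lemma K3form_of_int_right [simp]: "K3form u (of_int k * v) = k * K3form u v"
  by (simp add: K3form_def sum_distrib_left mult_ac)
lemma K3form_numeral_left [simp]: "K3form (numeral k * v) u = numeral k * K3form v u"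
  using K3form_of_int_left[of "numeral k"] by simp
lemma K3form_numeral_right [simp]: "K3form u (numeral k * v) = numeral k * K3form u v"
  using K3form_of_int_right[of _ "numeral k"] by simp
lemma K3form_minus_left [simp]: "K3form (- v) u = - K3form v u"
  using K3form_of_int_left[of "-1"] by simp
lemma K3form_minus_right [simp]: "K3form u (- v) = - K3form u v"
  using K3form_of_int_right[of _ "-1"] by simp
lemma K3form_diff_left [simp]: "K3form (v - w) u = K3form v u - K3form w u"
  using K3form_add_left[of v "- w"] by simp
lemma K3form_diff_right [simp]: "K3form u (v - w) = K3form u v - K3form u w"
  using K3form_add_right[of u v "- w"] by simp
lemma K3form_zero_left [simp]: "K3form 0 u = 0"
  using K3form_of_int_left[of 0] by simp
lemma K3form_zero_right [simp]: "K3form u 0 = 0"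
  using K3form_of_int_right[of _ 0] by simp

lemma K3vecs_add [intro]: "v \<in> K3vecs \<Longrightarrow> w \<in> K3vecs \<Longrightarrow> v + w \<in> K3vecs"
  by (simp add: K3vecs_def)
lemma K3vecs_diff [intro]: "v \<in> K3vecs \<Longrightarrow> w \<in> K3vecs \<Longrightarrow> v - w \<in> K3vecs"
  by (simp add: K3vecs_def)
lemma K3vecs_minus [intro]: "v \<in> K3vecs \<Longrightarrow> - v \<in> K3vecs"
  by (simp add: K3vecs_def)
lemma K3vecs_mult [intro]: "v \<in> K3vecs \<Longrightarrow> c * v \<in> K3vecs"
  by (simp add: K3vecs_def)
lemma K3vecs_zero [intro]: "0 \<in> K3vecs"
  by (simp add: K3vecs_def)

lemma three_mult_cancel: "(3 :: zvec) * v = 3 * w \<Longrightarrow> v = w"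
  by (simp add: fun_eq_iff)

section \<open>Unimodularity of the K3 lattice\<close>

definition unit_vec :: "nat \<Rightarrow> zvec" where "unit_vec j = (\<lambda>i. if i = j then 1 else 0)"

lemma K3form_unit_vec_left: "j < 22 \<Longrightarrow> K3form (unit_vec j) z = (\<Sum>k<22. K3gram j k * z k)"
proof -
  have "(\<lambda>i. \<Sum>k<22. K3gram i k * unit_vec j i * z k)
      = (\<lambda>i. if i = j then \<Sum>k<22. K3gram j k * z k else 0)"
    by (auto simp: unit_vec_def)
  then show "j < 22 \<Longrightarrow> ?thesis" unfolding K3form_def by (simp only:) simp
qed

lemma K3form_unit_vec_U:
  "K3form (unit_vec 0) z = z 1" "K3form (unit_vec 1) z = z 0"
  "K3form (unit_vec 2) z = z 3" "K3form (unit_vec 3) z = z 2"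
  "K3form (unit_vec 4) z = z 5" "K3form (unit_vec 5) z = z 4"
proof -
  have "K3form (unit_vec j) z = (\<Sum>k\<in>{0,1,2,3,4,5}. K3gram j k * z k)" if "j < 6" for j
  proof -
    have "{0,1,2,3,4,5} \<subseteq> {..<22::nat}" by auto
    moreover have "K3gram j k = 0" if "k \<notin> {0,1,2,3,4,5}" for k
      using \<open>j < 6\<close> that by (auto simp: K3gram_def)
    ultimately show ?thesis using \<open>j < 6\<close> K3form_unit_vec_left[of j z]
      by (simp add: sum.mono_neutral_right[of "{..<22}" "{0,1,2,3,4,5}"])
  qed
  then show "K3form (unit_vec 0) z = z 1" "K3form (unit_vec 1) z = z 0"
    "K3form (unit_vec 2) z = z 3" "K3form (unit_vec 3) z = z 2"
    "K3form (unit_vec 4) z = z 5" "K3form (unit_vec 5) z = z 4"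
    by (simp_all add: K3gram_def)
qed

lemma e8_edge_iff:
  "e8_edge a b \<longleftrightarrow>
     (a, b) \<in> {(0,2), (2,0), (2,3), (3,2), (3,4), (4,3), (4,5), (5,4), (5,6), (6,5), (6,7), (7,6),
       (1,3), (3,1)}"
  unfolding e8_edge_def by (auto simp: doubleton_eq_iff)

lemma E8neg_unimodular:
  fixes z :: "nat \<Rightarrow> int"
  assumes dvd_rows: "\<And>a. a < 8 \<Longrightarrow> m dvd (\<Sum>b<8. e8neg a b * z b)" and "b < 8"
  shows "m dvd z b"
proof -
  define y where "y a = (\<Sum>b<8. e8neg a b * z b)" for a
  have y: "y 0 = - 2 * z 0 + z 2" "y 1 = - 2 * z 1 + z 3" "y 2 = z 0 - 2 * z 2 + z 3"
    "y 3 = z 1 + z 2 - 2 * z 3 + z 4" "y 4 = z 3 - 2 * z 4 + z 5" "y 5 = z 4 - 2 * z 5 + z 6"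
    "y 6 = z 5 - 2 * z 6 + z 7" "y 7 = z 6 - 2 * z 7"
    by (simp_all add: y_def eval_nat_numeral e8neg_def e8_edge_iff)
  \<comment> \<open>the inverse of the Gram matrix of E8(-1) is integral\<close>
  have z: "z 0 = - (4 * y 0 + 5 * y 1 + 7 * y 2 + 10 * y 3 + 8 * y 4 + 6 * y 5 + 4 * y 6 + 2 * y 7)"
    "z 1 = - (5 * y 0 + 8 * y 1 + 10 * y 2 + 15 * y 3 + 12 * y 4 + 9 * y 5 + 6 * y 6 + 3 * y 7)"
    "z 2 = - (7 * y 0 + 10 * y 1 + 14 * y 2 + 20 * y 3 + 16 * y 4 + 12 * y 5 + 8 * y 6 + 4 * y 7)"
    "z 3 = - (10 * y 0 + 15 * y 1 + 20 * y 2 + 30 * y 3 + 24 * y 4 + 18 * y 5 + 12 * y 6 + 6 * y 7)"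
    "z 4 = - (8 * y 0 + 12 * y 1 + 16 * y 2 + 24 * y 3 + 20 * y 4 + 15 * y 5 + 10 * y 6 + 5 * y 7)"
    "z 5 = - (6 * y 0 + 9 * y 1 + 12 * y 2 + 18 * y 3 + 15 * y 4 + 12 * y 5 + 8 * y 6 + 4 * y 7)"
    "z 6 = - (4 * y 0 + 6 * y 1 + 8 * y 2 + 12 * y 3 + 10 * y 4 + 8 * y 5 + 6 * y 6 + 3 * y 7)"
    "z 7 = - (2 * y 0 + 3 * y 1 + 4 * y 2 + 6 * y 3 + 5 * y 4 + 4 * y 5 + 3 * y 6 + 2 * y 7)"
    unfolding y by simp_all
  have "m dvd y a" if "a < 8" for a
    using dvd_rows[OF that] by (simp add: y_def)
  then have "m dvd y 0" "m dvd y 1" "m dvd y 2" "m dvd y 3"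
    "m dvd y 4" "m dvd y 5" "m dvd y 6" "m dvd y 7"
    by simp_all
  moreover have "b \<in> {0, 1, 2, 3, 4, 5, 6, 7}" using \<open>b < 8\<close> by auto
  ultimately show ?thesis by (elim insertE emptyE) (use z in simp_all)
qed

lemma K3gram_E8_block:
  assumes "c = 6 \<or> c = 14" "a < 8"
  shows "K3gram (c + a) k = (if c \<le> k \<and> k < c + 8 then e8neg a (k - c) else 0)"
  using assms by (auto simp: K3gram_def)

lemma K3form_unit_vec_E8:
  assumes "c = 6 \<or> c = 14" "a < 8"
  shows "K3form (unit_vec (c + a)) z = (\<Sum>b<8. e8neg a b * z (c + b))"
proof -
  have "K3form (unit_vec (c + a)) z = (\<Sum>k\<in>{c..<c+8}. e8neg a (k - c) * z k)"
    using assms K3form_unit_vec_left[of "c + a" z]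
    by (auto simp: K3gram_E8_block if_distrib[of "\<lambda>x. x * _"] sum.If_cases intro!: sum.cong)
  also have "\<dots> = (\<Sum>b<8. e8neg a b * z (c + b))"
    using sum.shift_bounds_nat_ivl[of "\<lambda>k. e8neg a (k - c) * z k" 0 c 8]
    by (simp add: lessThan_atLeast0 add.commute)
  finally show ?thesis .
qed

lemma K3_unimodular_dvd:
  assumes "z \<in> K3vecs" and dvd_units: "\<And>j. j < 22 \<Longrightarrow> m dvd K3form (unit_vec j) z"
  shows "m dvd z i"
proof -
  have E8: "m dvd z (c + b)" if c: "c = 6 \<or> c = 14" and "b < 8" for c b
  proof (rule E8neg_unimodular[OF _ \<open>b < 8\<close>])
    fix a :: nat assume "a < 8"
    then show "m dvd (\<Sum>b<8. e8neg a b * z (c + b))"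
      using dvd_units[of "c + a"] K3form_unit_vec_E8[OF c \<open>a < 8\<close>] c by auto
  qed
  consider "i < 6" | "6 \<le> i \<and> i < 14" | "14 \<le> i \<and> i < 22" | "22 \<le> i" by linarith
  then show ?thesis
  proof cases
    case 1
    then have "i \<in> {0, 1, 2, 3, 4, 5}" by auto
    moreover have "m dvd z 0" "m dvd z 1" "m dvd z 2" "m dvd z 3" "m dvd z 4" "m dvd z 5"
      using dvd_units[of 0] dvd_units[of 1] dvd_units[of 2] dvd_units[of 3] dvd_units[of 4]
        dvd_units[of 5]
      by (simp_all only: K3form_unit_vec_U)
    ultimately show ?thesis by (elim insertE emptyE) simp_all
  next
    case 2
    then show ?thesis using E8[of 6 "i - 6"] by auto
  next
    case 3
    then show ?thesis using E8[of 14 "i - 14"] by auto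
  next
    case 4
    then show ?thesis using \<open>z \<in> K3vecs\<close> by (simp add: K3vecs_def)
  qed
qed

lemma K3vecs_dvd_form_imp_multiple:
  assumes z: "z \<in> K3vecs" and dvd: "\<forall>y\<in>K3vecs. m dvd K3form y z"
  shows "\<exists>r\<in>K3vecs. z = of_int m * r"
proof
  have "m dvd z i" for i
    by (rule K3_unimodular_dvd[OF z]) (simp add: dvd K3vecs_def unit_vec_def)
  then show "z = of_int m * (\<lambda>i. z i div m)"
    by (simp add: fun_eq_iff)
  show "(\<lambda>i. z i div m) \<in> K3vecs" using z by (simp add: K3vecs_def)
qed

lemma K3form_nondegenerate:
  assumes "z \<in> K3vecs" and "\<forall>y\<in>K3vecs. K3form y z = 0"
  shows "z = 0"
  \<comment> \<open>the case m = 0 of the previous lemma, using z i div 0 = 0\<close>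
  using K3vecs_dvd_form_imp_multiple[of z 0] assms by auto

section \<open>Arithmetic modulo 3\<close>

lemma not_dvd3_imp_square: "\<not> 3 dvd (d :: int) \<Longrightarrow> 3 dvd d * d - 1"
proof -
  assume "\<not> 3 dvd d"
  then have "3 dvd d - 1 \<or> 3 dvd d + 1" by presburger
  moreover have "d * d - 1 = (d - 1) * (d + 1)" by (simp add: algebra_simps)
  ultimately show ?thesis by auto
qed

lemma dvd3_mult_minus_one_imp_sign:
  fixes x y :: int
  assumes "3 dvd x * y - 1"
  shows "\<exists>e\<in>{1, -1}. 3 dvd 1 + e * x \<and> 3 dvd 1 + e * y"
proof -
  have "(x * y) mod 3 = 1" using assms by presburger
  then have "((x mod 3) * (y mod 3)) mod 3 = 1" by (simp add: mod_mult_eq)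
  moreover have "x mod 3 \<in> {0, 1, 2}" "y mod 3 \<in> {0, 1, 2}" by auto
  ultimately have "(x mod 3 = 1 \<and> y mod 3 = 1) \<or> (x mod 3 = 2 \<and> y mod 3 = 2)" by auto
  then have "(3 dvd 1 + (-1) * x \<and> 3 dvd 1 + (-1) * y) \<or> (3 dvd 1 + 1 * x \<and> 3 dvd 1 + 1 * y)"
    by presburger
  then show ?thesis by blast
qed

lemma dvd3_mult_imp: "3 dvd (x :: int) * y \<Longrightarrow> 3 dvd x \<or> 3 dvd y"
proof -
  assume "3 dvd x * y"
  then have "((x mod 3) * (y mod 3)) mod 3 = 0" by (simp add: mod_mult_eq dvd_eq_mod_eq_0)
  moreover have "x mod 3 \<in> {0, 1, 2}" "y mod 3 \<in> {0, 1, 2}" by auto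
  ultimately have "x mod 3 = 0 \<or> y mod 3 = 0" by auto
  then show ?thesis by presburger
qed

text \<open>Modulo 3 the hypotheses say that the matrix with rows (a, b) and (c, d) preserves the
  quadratic form x y of the discriminant group of U(3).\<close>

lemma isotropic_isometry_mod3_cases:
  fixes a b c d :: int
  assumes ab: "3 dvd a * b" and cd: "3 dvd c * d" and det: "3 dvd a * d + b * c - 1"
  obtains e where "e = 1 \<or> e = -1"
    and "3 dvd a \<and> 3 dvd d \<and> 3 dvd 1 + e * b \<and> 3 dvd 1 + e * c
       \<or> 3 dvd b \<and> 3 dvd c \<and> 3 dvd 1 + e * a \<and> 3 dvd 1 + e * d"
proof (cases "3 dvd a")
  case True
  then have "3 dvd b * c - 1" using det by (metis add_diff_eq dvd_add_right_iff dvd_mult2)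
  then obtain e where e: "e \<in> {1, -1}" "3 dvd 1 + e * b" "3 dvd 1 + e * c"
    using dvd3_mult_minus_one_imp_sign by blast
  then have "\<not> 3 dvd c" by (auto; presburger)
  then have "3 dvd d" using dvd3_mult_imp[OF cd] by blast
  then show ?thesis using that[of e] True e by blast
next
  case False
  then have "3 dvd b" using dvd3_mult_imp[OF ab] by blast
  then have "3 dvd a * d - 1"
    using det by (metis add.commute add_diff_eq dvd_add_right_iff dvd_mult2)
  then obtain e where e: "e \<in> {1, -1}" "3 dvd 1 + e * a" "3 dvd 1 + e * d"
    using dvd3_mult_minus_one_imp_sign by blast
  then have "\<not> 3 dvd d" by (auto; presburger)
  then have "3 dvd c" using dvd3_mult_imp[OF cd] by blast
  then show ?thesis using that[of e] \<open>3 dvd b\<close> e by blast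
qed

section \<open>Primitive copies of U(3) in the K3 lattice\<close>

lemma span2_commute: "span2 x y = span2 y x"
  by (auto simp: span2_def) (metis add.commute)+

lemma exists_dual_vector:
  assumes x: "x \<in> K3vecs" and y: "y \<in> K3vecs"
    and xx: "K3form x x = 0" and yy: "K3form y y = 0" and xy: "K3form x y = 3"
    and prim: "\<forall>v\<in>K3vecs. 3 * v \<in> span2 x y \<longrightarrow> v \<in> span2 x y"
  shows "\<exists>w\<in>K3vecs. K3form w x = 1 \<and> K3form w y = 0"
proof -
  have yx: "K3form y x = 3" using xy K3form_commute by metis
  have not_dvd3: "\<exists>w\<in>K3vecs. \<not> 3 dvd K3form w (of_int s * x + of_int t * y)"
    if "\<not> (3 dvd s \<and> 3 dvd t)" for s t
  proof (rule ccontr)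
    assume "\<not> ?thesis"
    then obtain r where r: "r \<in> K3vecs" and sxty: "of_int s * x + of_int t * y = of_int 3 * r"
      using K3vecs_dvd_form_imp_multiple[of "of_int s * x + of_int t * y" 3] x y by blast
    then have "3 * r \<in> span2 x y"
      unfolding span2_def
      by (simp only: vadd_eq_plus vsmul_eq_mult of_int_numeral) (blast dest: sym)
    then have "r \<in> span2 x y" using prim r by blast
    then obtain a b where "r = of_int a * x + of_int b * y" by (auto simp: span2_def)
    then have "3 * t = 9 * b" "3 * s = 9 * a"
      using arg_cong[OF sxty, of "\<lambda>v. K3form v x"] arg_cong[OF sxty, of "\<lambda>v. K3form v y"]
      by (simp_all add: xx yy xy yx mult.assoc)
    then show False using that by presburger
  qed
  obtain w1 where w1: "w1 \<in> K3vecs" and "\<not> 3 dvd K3form w1 (of_int 1 * x + of_int 0 * y)"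
    using not_dvd3[of 1 0] by auto
  then have s1: "\<not> 3 dvd K3form w1 x" by simp
  obtain w2 where w2: "w2 \<in> K3vecs"
    and d: "\<not> 3 dvd K3form w2 (of_int (- K3form w1 y) * x + of_int (K3form w1 x) * y)"
    using not_dvd3[of "- K3form w1 y" "K3form w1 x"] s1 by auto
  define w where "w = of_int (K3form w2 y) * w1 - of_int (K3form w1 y) * w2"
  define det where "det = K3form w x"
  have wy: "K3form w y = 0" by (simp add: w_def)
  have "\<not> 3 dvd det" using d by (simp add: det_def w_def) (simp add: algebra_simps)
  then obtain k where k: "det * det - 1 = 3 * k" using not_dvd3_imp_square by blast
  define w' where "w' = of_int det * w - of_int k * y"
  have "w' \<in> K3vecs" using w1 w2 y by (auto simp: w'_def w_def)
  moreover have "K3form w' x = 1" using k by (simp add: w'_def yx flip: det_def)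
  moreover have "K3form w' y = 0" by (simp add: w'_def wy yy)
  ultimately show ?thesis by blast
qed

locale int_subgroup =
  fixes A :: "zvec set"
  assumes zero_mem: "0 \<in> A"
    and add_mem: "\<And>v w. v \<in> A \<Longrightarrow> w \<in> A \<Longrightarrow> v + w \<in> A"
    and minus_mem: "\<And>v. v \<in> A \<Longrightarrow> - v \<in> A"
begin

lemma of_nat_Suc_mult: "of_nat (Suc n) * (v :: zvec) = v + of_nat n * v"
  by (simp only: of_nat_Suc distrib_right mult.left_neutral)

lemma of_int_mult_mem:
  assumes v: "v \<in> A" shows "of_int k * v \<in> A"
proof -
  have nat: "of_nat n * v \<in> A" for n
    by (induction n) (simp_all only: of_nat_0 mult_zero_left zero_mem of_nat_Suc_mult add_mem[OF v])
  show ?thesis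
  proof (cases k rule: int_cases)
    case (nonneg n)
    then show ?thesis using nat[of n] by (simp only: of_int_of_nat_eq)
  next
    case (neg n)
    then show ?thesis using minus_mem[OF nat[of "Suc n"]]
      by (simp only: of_int_minus of_int_of_nat_eq mult_minus_left)
  qed
qed

lemma isometry_of_int_mult:
  assumes f: "is_isometry A f" and v: "v \<in> A"
  shows "f (of_int k * v) = of_int k * f v"
proof -
  have hom: "f (u + w) = f u + f w" if "u \<in> A" "w \<in> A" for u w
    using f that by (simp add: is_isometry_def)
  have "f 0 + f 0 = f 0" using hom[OF zero_mem zero_mem] by (simp only: add_0)
  then have f0: "f 0 = 0" by (simp only: add_cancel_left_right)
  have nat_mem: "of_nat n * v \<in> A" for n
    using of_int_mult_mem[OF v, of "int n"] by (simp only: of_int_of_nat_eq)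
  have nat: "f (of_nat n * v) = of_nat n * f v" for n
    by (induction n) (simp_all only: of_nat_0 mult_zero_left f0 of_nat_Suc_mult hom[OF v nat_mem])
  have "f (- u) = - f u" if "u \<in> A" for u
  proof -
    have "f u + f (- u) = 0"
      using hom[OF that minus_mem[OF that]] f0 by (simp only: add.right_inverse)
    then show ?thesis by (simp only: add.commute[of "f u"] eq_neg_iff_add_eq_0)
  qed
  then show ?thesis
    using nat nat_mem
    by (cases k rule: int_cases) (simp_all only: of_int_of_nat_eq of_int_minus mult_minus_left)
qed

end

interpretation K3: int_subgroup K3vecs by unfold_locales auto

lemma isometry_mem: "is_isometry A f \<Longrightarrow> v \<in> A \<Longrightarrow> f v \<in> A"
  unfolding is_isometry_def by (metis bij_betw_apply)
lemma isometry_add: "is_isometry A f \<Longrightarrow> v \<in> A \<Longrightarrow> w \<in> A \<Longrightarrow> f (v + w) = f v + f w"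
  unfolding is_isometry_def by simp
lemma isometry_form: "is_isometry A f \<Longrightarrow> v \<in> A \<Longrightarrow> w \<in> A \<Longrightarrow> K3form (f v) (f w) = K3form v w"
  unfolding is_isometry_def by simp
lemma isometry_surj: "is_isometry A f \<Longrightarrow> v \<in> A \<Longrightarrow> \<exists>u\<in>A. f u = v"
  unfolding is_isometry_def bij_betw_def by (metis imageE)

locale primitive_U3 =
  fixes x1 x2 :: zvec
  assumes x1: "x1 \<in> K3vecs" and x2: "x2 \<in> K3vecs"
    and x1_x1: "K3form x1 x1 = 0" and x2_x2: "K3form x2 x2 = 0" and x1_x2: "K3form x1 x2 = 3"
    and primitive: "primitive_in_K3 (span2 x1 x2)"
begin

lemma x2_x1: "K3form x2 x1 = 3" using x1_x2 K3form_commute by metis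
lemmas x_forms = x1_x1 x2_x2 x1_x2 x2_x1

abbreviation "M \<equiv> span2 x1 x2"
abbreviation "N \<equiv> orth2 x1 x2"

lemma mem_M_iff: "v \<in> M \<longleftrightarrow> (\<exists>a b. v = of_int a * x1 + of_int b * x2)"
  by (auto simp: span2_def)
lemma mem_N_iff: "v \<in> N \<longleftrightarrow> v \<in> K3vecs \<and> K3form v x1 = 0 \<and> K3form v x2 = 0"
  by (simp add: orth2_def)

lemma mem_M_if_triple_mem: "v \<in> K3vecs \<Longrightarrow> 3 * v \<in> M \<Longrightarrow> v \<in> M"
  using primitive[unfolded primitive_in_K3_def, rule_format, of v 3] by simp

sublocale N: int_subgroup N by unfold_locales (auto simp: mem_N_iff)

lemma N_K3vecs: "v \<in> N \<Longrightarrow> v \<in> K3vecs"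
  and N_form_x1: "v \<in> N \<Longrightarrow> K3form v x1 = 0" and N_form_x2: "v \<in> N \<Longrightarrow> K3form v x2 = 0"
  and x1_form_N: "v \<in> N \<Longrightarrow> K3form x1 v = 0" and x2_form_N: "v \<in> N \<Longrightarrow> K3form x2 v = 0"
  by (simp_all add: mem_N_iff K3form_commute[of _ v])

definition w1 :: zvec where "w1 = (SOME w. w \<in> K3vecs \<and> K3form w x1 = 1 \<and> K3form w x2 = 0)"
definition w2 :: zvec where "w2 = (SOME w. w \<in> K3vecs \<and> K3form w x1 = 0 \<and> K3form w x2 = 1)"

lemma w1: "w1 \<in> K3vecs" "K3form w1 x1 = 1" "K3form w1 x2 = 0" "K3form x1 w1 = 1" "K3form x2 w1 = 0"
proof -
  have "\<exists>w\<in>K3vecs. K3form w x1 = 1 \<and> K3form w x2 = 0"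
    using exists_dual_vector[OF x1 x2 x1_x1 x2_x2 x1_x2] mem_M_if_triple_mem by blast
  then have "\<exists>w. w \<in> K3vecs \<and> K3form w x1 = 1 \<and> K3form w x2 = 0" by blast
  then have "w1 \<in> K3vecs \<and> K3form w1 x1 = 1 \<and> K3form w1 x2 = 0"
    unfolding w1_def by (rule someI_ex)
  then show "w1 \<in> K3vecs" "K3form w1 x1 = 1" "K3form w1 x2 = 0"
    "K3form x1 w1 = 1" "K3form x2 w1 = 0"
    by (simp_all add: K3form_commute[of _ w1])
qed

lemma w2: "w2 \<in> K3vecs" "K3form w2 x1 = 0" "K3form w2 x2 = 1" "K3form x1 w2 = 0" "K3form x2 w2 = 1"
proof -
  have "\<exists>w\<in>K3vecs. K3form w x2 = 1 \<and> K3form w x1 = 0"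
    using exists_dual_vector[OF x2 x1 x2_x2 x1_x1 x2_x1] mem_M_if_triple_mem span2_commute[of x2 x1]
    by simp
  then have "\<exists>w. w \<in> K3vecs \<and> K3form w x1 = 0 \<and> K3form w x2 = 1" by blast
  then have "w2 \<in> K3vecs \<and> K3form w2 x1 = 0 \<and> K3form w2 x2 = 1"
    unfolding w2_def by (rule someI_ex)
  then show "w2 \<in> K3vecs" "K3form w2 x1 = 0" "K3form w2 x2 = 1"
    "K3form x1 w2 = 0" "K3form x2 w2 = 1"
    by (simp_all add: K3form_commute[of _ w2])
qed

text \<open>Three times the orthogonal projections of L \<otimes> Q onto M \<otimes> Q and N \<otimes> Q; they are
  integral because the form on M is 3 times a unimodular one.\<close>

definition projM :: "zvec \<Rightarrow> zvec" where
  "projM v = of_int (K3form v x2) * x1 + of_int (K3form v x1) * x2"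
definition projN :: "zvec \<Rightarrow> zvec" where
  "projN v = 3 * v - projM v"

lemma projM_add [simp]: "projM (v + w) = projM v + projM w"
  by (simp add: projM_def algebra_simps)
lemma projM_of_int [simp]: "projM (of_int k * v) = of_int k * projM v"
  by (simp add: projM_def distrib_left mult.assoc)
lemma projM_N: "v \<in> N \<Longrightarrow> projM v = 0"
  by (simp add: projM_def mem_N_iff)
lemma projM_K3vecs: "projM v \<in> K3vecs"
  unfolding projM_def using x1 x2 by blast
lemma projM_form_N: "n \<in> N \<Longrightarrow> K3form (projM v) n = 0"
  and N_form_projM: "n \<in> N \<Longrightarrow> K3form n (projM v) = 0"
  by (simp_all add: projM_def x1_form_N x2_form_N N_form_x1 N_form_x2)
lemma projM_form_x: "K3form (projM v) x1 = 3 * K3form v x1" "K3form (projM v) x2 = 3 * K3form v x2"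
  by (simp_all add: projM_def x_forms)

lemma projN_mem_N: "v \<in> K3vecs \<Longrightarrow> projN v \<in> N"
  unfolding mem_N_iff projN_def using projM_K3vecs by (auto simp: projM_form_x)
lemma projN_add: "projN (v + w) = projN v + projN w"
  by (simp add: projN_def algebra_simps)
lemma projN_of_int: "projN (of_int k * v) = of_int k * projN v"
  by (simp add: projN_def right_diff_distrib mult.left_commute)
lemma triple_eq_projM_projN: "3 * v = projM v + projN v"
  by (simp add: projN_def)

lemma form_triple_split:
  "K3form (3 * v) (3 * w) = K3form (projM v) (projM w) + K3form (projN v) (projN w)"
  if "v \<in> K3vecs" "w \<in> K3vecs"
proof -
  have "K3form (3 * v) (3 * w) = K3form (projM v + projN v) (projM w + projN w)"
    by (simp only: triple_eq_projM_projN)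
  then show ?thesis using projM_form_N N_form_projM projN_mem_N that by simp
qed

lemma K3vecs_minus_dual_mem_N:
  "v \<in> K3vecs \<Longrightarrow> v - of_int (K3form v x2) * w2 - of_int (K3form v x1) * w1 \<in> N"
  unfolding mem_N_iff using w1 w2 by auto

lemma K3form_dvd_if_dvd_on_duals_and_N:
  assumes "m dvd K3form w1 z" "m dvd K3form w2 z" and N_dvd: "\<And>s. s \<in> N \<Longrightarrow> m dvd K3form s z"
    and y: "y \<in> K3vecs"
  shows "m dvd K3form y z"
proof -
  define s where "s = y - of_int (K3form y x2) * w2 - of_int (K3form y x1) * w1"
  have "K3form y z = K3form s z + K3form y x2 * K3form w2 z + K3form y x1 * K3form w1 z"
    by (simp add: s_def)
  then show ?thesis using assms N_dvd[OF K3vecs_minus_dual_mem_N[OF y, folded s_def]] by simp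
qed

lemma orth_N_imp_mem_M:
  assumes w: "w \<in> K3vecs" and orth: "\<forall>n\<in>N. K3form w n = 0"
  shows "w \<in> M"
proof -
  have "\<forall>u\<in>K3vecs. K3form u (projN w) = 0"
  proof
    fix u assume u: "u \<in> K3vecs"
    have "3 * K3form u (projN w) = K3form (projM u + projN u) (projN w)"
      by (simp flip: triple_eq_projM_projN)
    also have "\<dots> = K3form (projN u) (3 * w) - K3form (projN u) (projM w)"
      using projM_form_N[OF projN_mem_N[OF w]] by (simp add: projN_def)
    also have "\<dots> = 0"
      using orth[rule_format, OF projN_mem_N[OF u]] N_form_projM[OF projN_mem_N[OF u]]
      by (simp add: K3form_commute[of "projN u"])
    finally show "K3form u (projN w) = 0" by simp
  qed
  then have "projN w = 0"
    using K3form_nondegenerate projN_mem_N[OF w] N_K3vecs by blast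
  then have "3 * w = projM w" by (simp add: projN_def)
  moreover have "projM w \<in> M" unfolding mem_M_iff projM_def by blast
  ultimately show ?thesis using mem_M_if_triple_mem w by simp
qed

lemma isometry_preserving_N_maps_M:
  assumes g: "is_isometry K3vecs g" and gN: "N \<subseteq> g ` N" and m: "m \<in> M"
  shows "g m \<in> M"
proof (rule orth_N_imp_mem_M)
  have m_K3: "m \<in> K3vecs" using m x1 x2 by (auto simp: mem_M_iff)
  then show "g m \<in> K3vecs" using isometry_mem[OF g] by blast
  show "\<forall>n\<in>N. K3form (g m) n = 0"
  proof
    fix n assume "n \<in> N"
    then obtain n' where n': "n' \<in> N" "n = g n'" using gN by blast
    then have "K3form (g m) n = K3form m n'" using isometry_form[OF g m_K3 N_K3vecs] by simp
    then show "K3form (g m) n = 0"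
      using m n' by (auto simp: mem_M_iff x1_form_N x2_form_N)
  qed
qed

lemma M_add: "v \<in> M \<Longrightarrow> w \<in> M \<Longrightarrow> v + w \<in> M"
proof -
  assume "v \<in> M" "w \<in> M"
  then obtain a b c d where "v = of_int a * x1 + of_int b * x2" "w = of_int c * x1 + of_int d * x2"
    by (auto simp: mem_M_iff)
  then have "v + w = of_int (a + c) * x1 + of_int (b + d) * x2" by (simp add: algebra_simps)
  then show ?thesis unfolding mem_M_iff by blast
qed

lemma x2_mem_M: "x2 \<in> M"
  unfolding mem_M_iff by (rule exI[of _ 0], rule exI[of _ 1]) simp

definition n1 :: zvec where "n1 = projN w1"
definition n2 :: zvec where "n2 = projN w2"

lemma n1_mem_N: "n1 \<in> N" and n2_mem_N: "n2 \<in> N"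
  unfolding n1_def n2_def using projN_mem_N w1 w2 by auto
lemma n1_eq: "n1 = 3 * w1 - x2" and n2_eq: "n2 = 3 * w2 - x1"
  by (simp_all add: n1_def n2_def projN_def projM_def w1 w2)

end

section \<open>Extending isometries of the orthogonal complement\<close>

locale U3_gluing = primitive_U3 +
  fixes \<zeta> :: "zvec \<Rightarrow> zvec"
  assumes zeta: "is_isometry N \<zeta>"
begin

lemma zeta_mem: "v \<in> N \<Longrightarrow> \<zeta> v \<in> N"
  using isometry_mem[OF zeta] .
lemma zeta_add: "v \<in> N \<Longrightarrow> w \<in> N \<Longrightarrow> \<zeta> (v + w) = \<zeta> v + \<zeta> w"
  using isometry_add[OF zeta] .
lemma zeta_form: "v \<in> N \<Longrightarrow> w \<in> N \<Longrightarrow> K3form (\<zeta> v) (\<zeta> w) = K3form v w"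
  using isometry_form[OF zeta] .
lemma zeta_surj: "v \<in> N \<Longrightarrow> \<exists>u\<in>N. \<zeta> u = v"
  using isometry_surj[OF zeta] .
lemma zeta_of_int: "v \<in> N \<Longrightarrow> \<zeta> (of_int k * v) = of_int k * \<zeta> v"
  using N.isometry_of_int_mult[OF zeta] .
lemma zeta_numeral: "v \<in> N \<Longrightarrow> \<zeta> (numeral k * v) = numeral k * \<zeta> v"
  using zeta_of_int[of v "numeral k"] by simp

lemma not_both_extend:
  assumes "extends_fixing N (vadd x1 x2) \<zeta>" and "extends_fixing N (vadd x1 x2) (\<lambda>v. vneg (\<zeta> v))"
  shows False
proof -
  obtain g where g: "is_isometry K3vecs g" and g_eta: "g (x1 + x2) = x1 + x2"
    and gN: "\<forall>v\<in>N. g v = \<zeta> v"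
    using assms(1) unfolding extends_fixing_def by auto
  obtain h where h: "is_isometry K3vecs h" and h_eta: "h (x1 + x2) = x1 + x2"
    and hN: "\<forall>v\<in>N. h v = - \<zeta> v"
    using assms(2) unfolding extends_fixing_def by auto
  have "N \<subseteq> g ` N"
  proof
    fix n assume "n \<in> N"
    then obtain m where "m \<in> N" "\<zeta> m = n" using zeta_surj by blast
    then show "n \<in> g ` N" using gN by force
  qed
  moreover have "N \<subseteq> h ` N"
  proof
    fix n assume "n \<in> N"
    then obtain m where "m \<in> N" "\<zeta> m = - n" using zeta_surj N.minus_mem by blast
    then show "n \<in> h ` N" using hN by force
  qed
  ultimately have "g x2 + h x2 \<in> M"
    using isometry_preserving_N_maps_M[OF g] isometry_preserving_N_maps_M[OF h] M_add x2_mem_M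
    by blast
  have "3 * g w1 = g x2 + \<zeta> n1" "3 * h w1 = h x2 - \<zeta> n1"
    using K3.isometry_of_int_mult[OF g w1(1), of 3] isometry_add[OF g x2 N_K3vecs[OF n1_mem_N]]
      K3.isometry_of_int_mult[OF h w1(1), of 3] isometry_add[OF h x2 N_K3vecs[OF n1_mem_N]]
      gN hN n1_mem_N by (simp_all add: n1_eq)
  then have triple: "3 * (g w1 + h w1) = g x2 + h x2" by (simp add: algebra_simps)
  have "g w1 + h w1 \<in> K3vecs" using isometry_mem[OF g w1(1)] isometry_mem[OF h w1(1)] by blast
  then have "g w1 + h w1 \<in> M"
    using mem_M_if_triple_mem triple \<open>g x2 + h x2 \<in> M\<close> by simp
  then obtain a b where y: "g w1 + h w1 = of_int a * x1 + of_int b * x2"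
    by (auto simp: mem_M_iff)
  have "K3form (g x2) (x1 + x2) = 3" "K3form (h x2) (x1 + x2) = 3"
    using isometry_form[OF g x2, of "x1 + x2"] isometry_form[OF h x2, of "x1 + x2"]
      x1 x2 g_eta h_eta
    by (auto simp: x_forms)
  then have "9 * (a + b) = 6"
    using arg_cong[OF triple, of "\<lambda>v. K3form v (x1 + x2)"] by (simp add: y x_forms mult.assoc)
  then show False by presburger
qed

lemma form_zeta_projN_dvd3:
  assumes v: "v \<in> K3vecs" and s: "s \<in> N"
  shows "3 dvd K3form (\<zeta> (projN v)) s"
proof -
  obtain s' where s': "s' \<in> N" "\<zeta> s' = s" using zeta_surj[OF s] by blast
  then have "K3form (\<zeta> (projN v)) s = K3form (projN v) s'"
    using zeta_form[OF projN_mem_N[OF v]] by blast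
  also have "\<dots> = 3 * K3form v s'" using projM_form_N[OF s'(1)] by (simp add: projN_def)
  finally show ?thesis by simp
qed

lemma N_dvd3_imp_congruent_M:
  assumes m: "m \<in> N" and dvd: "\<forall>s\<in>N. 3 dvd K3form m s"
  shows "\<exists>r\<in>K3vecs. m = of_int (K3form m w1) * x1 + of_int (K3form m w2) * x2 + 3 * r"
proof -
  define z where "z = m - of_int (K3form m w1) * x1 - of_int (K3form m w2) * x2"
  have z: "z \<in> K3vecs" unfolding z_def using N_K3vecs[OF m] x1 x2 by blast
  have "3 dvd K3form s z" if s: "s \<in> N" for s
    using dvd s K3form_commute[of s m] K3form_commute[of s]
    by (simp add: z_def x1_form_N[OF s] x2_form_N[OF s])
  moreover have "K3form w1 z = 0" "K3form w2 z = 0"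
    using K3form_commute[of m] by (simp_all add: z_def w1 w2)
  ultimately have "\<forall>y\<in>K3vecs. 3 dvd K3form y z"
    using K3form_dvd_if_dvd_on_duals_and_N[of 3 z] by simp
  then obtain r where "r \<in> K3vecs" "z = of_int 3 * r"
    using K3vecs_dvd_form_imp_multiple[OF z] by blast
  then show ?thesis by (auto simp: z_def algebra_simps)
qed

text \<open>By zeta_projN_decomp, zeta n_i is congruent modulo 3L to q_i1 x1 + q_i2 x2.  Modulo 3 the
  q_ij form the matrix of the isometry that zeta induces on the discriminant group of N, which
  n1 / 3 and n2 / 3 generate.\<close>

definition q11 where "q11 = K3form (\<zeta> n1) w1"
definition q12 where "q12 = K3form (\<zeta> n1) w2"
definition q21 where "q21 = K3form (\<zeta> n2) w1"
definition q22 where "q22 = K3form (\<zeta> n2) w2"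

lemma zeta_projN_decomp:
  assumes w: "w \<in> K3vecs"
  defines "n \<equiv> projN w"
  obtains r where "r \<in> K3vecs"
    "\<zeta> n = of_int (K3form (\<zeta> n) w1) * x1 + of_int (K3form (\<zeta> n) w2) * x2 + 3 * r"
    "K3form r x1 = - K3form (\<zeta> n) w2" "K3form r x2 = - K3form (\<zeta> n) w1"
proof -
  have zn: "\<zeta> n \<in> N" using zeta_mem projN_mem_N[OF w] by (simp add: n_def)
  obtain r where r: "r \<in> K3vecs"
    and decomp: "\<zeta> n = of_int (K3form (\<zeta> n) w1) * x1 + of_int (K3form (\<zeta> n) w2) * x2 + 3 * r"
    using N_dvd3_imp_congruent_M[OF zn] form_zeta_projN_dvd3[OF w] by (auto simp: n_def)
  then have r3: "3 * r = \<zeta> n - of_int (K3form (\<zeta> n) w1) * x1 - of_int (K3form (\<zeta> n) w2) * x2"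
    by (simp add: algebra_simps)
  have "3 * K3form r x1 = 3 * - K3form (\<zeta> n) w2" "3 * K3form r x2 = 3 * - K3form (\<zeta> n) w1"
    using arg_cong[OF r3, of "\<lambda>v. K3form v x1"] arg_cong[OF r3, of "\<lambda>v. K3form v x2"] zn
    by (simp_all add: mem_N_iff x_forms)
  then show ?thesis using that r decomp by simp
qed

lemma q_constraints: "3 dvd q11 * q12" "3 dvd q21 * q22" "3 dvd q11 * q22 + q12 * q21 - 1"
proof -
  obtain r1 where r1: "r1 \<in> K3vecs" "\<zeta> n1 = of_int q11 * x1 + of_int q12 * x2 + 3 * r1"
    "K3form r1 x1 = - q12" "K3form r1 x2 = - q11"
    using zeta_projN_decomp[OF w1(1)] unfolding q11_def q12_def n1_def by blast
  obtain r2 where r2: "r2 \<in> K3vecs" "\<zeta> n2 = of_int q21 * x1 + of_int q22 * x2 + 3 * r2"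
    "K3form r2 x1 = - q22" "K3form r2 x2 = - q21"
    using zeta_projN_decomp[OF w2(1)] unfolding q21_def q22_def n2_def by blast
  have r_forms: "K3form x1 r1 = - q12" "K3form x2 r1 = - q11"
    "K3form x1 r2 = - q22" "K3form x2 r2 = - q21"
    using r1(3,4) r2(3,4) K3form_commute by metis+
  have "K3form (\<zeta> n1) (\<zeta> n1) = K3form n1 n1" using zeta_form[OF n1_mem_N n1_mem_N] .
  then have "K3form (of_int q11 * x1 + of_int q12 * x2 + 3 * r1)
      (of_int q11 * x1 + of_int q12 * x2 + 3 * r1)
      = K3form (3 * w1 - x2) (3 * w1 - x2)" using r1(2) n1_eq by simp
  then have "- 6 * (q11 * q12) + 9 * K3form r1 r1 = 9 * K3form w1 w1"
    by (simp add: r1(3,4) r_forms x_forms w1; simp add: algebra_simps)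
  then show "3 dvd q11 * q12" by presburger
  have "K3form (\<zeta> n2) (\<zeta> n2) = K3form n2 n2" using zeta_form[OF n2_mem_N n2_mem_N] .
  then have "K3form (of_int q21 * x1 + of_int q22 * x2 + 3 * r2)
      (of_int q21 * x1 + of_int q22 * x2 + 3 * r2)
      = K3form (3 * w2 - x1) (3 * w2 - x1)" using r2(2) n2_eq by simp
  then have "- 6 * (q21 * q22) + 9 * K3form r2 r2 = 9 * K3form w2 w2"
    by (simp add: r2(3,4) r_forms x_forms w2; simp add: algebra_simps)
  then show "3 dvd q21 * q22" by presburger
  have "K3form (\<zeta> n1) (\<zeta> n2) = K3form n1 n2" using zeta_form[OF n1_mem_N n2_mem_N] .
  then have "K3form (of_int q11 * x1 + of_int q12 * x2 + 3 * r1)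
      (of_int q21 * x1 + of_int q22 * x2 + 3 * r2)
      = K3form (3 * w1 - x2) (3 * w2 - x1)" using r1(2) r2(2) n1_eq n2_eq by simp
  then have "- 3 * (q11 * q22 + q12 * q21) + 9 * K3form r1 r2 = 9 * K3form w1 w2 - 3"
    by (simp add: r1(3,4) r2(3,4) r_forms x_forms w1 w2; simp add: algebra_simps)
  then show "3 dvd q11 * q22 + q12 * q21 - 1" by presburger
qed

text \<open>The candidate extension of e zeta is v \<mapsto> glued sw e v / 3, where twisted_projM sw is
  projM followed by the identity of M (sw false) or by the swap of x1 and x2 (sw true).  The
  coordinatewise division in glue_map is exact only under the hypothesis of integral_gluing.\<close>

definition twisted_projM :: "bool \<Rightarrow> zvec \<Rightarrow> zvec" where
  "twisted_projM sw v =
     (if sw then of_int (K3form v x1) * x1 + of_int (K3form v x2) * x2 else projM v)"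
definition glued :: "bool \<Rightarrow> int \<Rightarrow> zvec \<Rightarrow> zvec" where
  "glued sw e v = twisted_projM sw v + of_int e * \<zeta> (projN v)"
definition glue_map :: "bool \<Rightarrow> int \<Rightarrow> zvec \<Rightarrow> zvec" where
  "glue_map sw e v = (\<lambda>i. glued sw e v i div 3)"

definition glue_condition :: "bool \<Rightarrow> int \<Rightarrow> bool" where
  "glue_condition sw e \<longleftrightarrow>
     (if sw then 3 dvd q12 \<and> 3 dvd q21 \<and> 3 dvd 1 + e * q11 \<and> 3 dvd 1 + e * q22
      else 3 dvd q11 \<and> 3 dvd q22 \<and> 3 dvd 1 + e * q12 \<and> 3 dvd 1 + e * q21)"

lemma twisted_projM_add: "twisted_projM sw (v + w) = twisted_projM sw v + twisted_projM sw w"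
  by (simp add: twisted_projM_def algebra_simps)
lemma twisted_projM_of_int: "twisted_projM sw (of_int k * v) = of_int k * twisted_projM sw v"
  by (simp add: twisted_projM_def distrib_left mult.assoc)
lemma twisted_projM_N: "v \<in> N \<Longrightarrow> twisted_projM sw v = 0"
  by (simp add: twisted_projM_def projM_N N_form_x1 N_form_x2)
lemma twisted_projM_K3vecs: "twisted_projM sw v \<in> K3vecs"
  unfolding twisted_projM_def using projM_K3vecs x1 x2 by auto
lemma twisted_projM_form_N: "n \<in> N \<Longrightarrow> K3form (twisted_projM sw v) n = 0"
  and N_form_twisted_projM: "n \<in> N \<Longrightarrow> K3form n (twisted_projM sw v) = 0"
  by (simp_all add: twisted_projM_def projM_form_N N_form_projM x1_form_N x2_form_N
      N_form_x1 N_form_x2)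
lemma twisted_projM_form:
    "K3form (twisted_projM sw v) (twisted_projM sw w) = K3form (projM v) (projM w)"
  and projM_form_twisted_projM:
    "K3form (projM u) (twisted_projM sw y) = K3form (twisted_projM sw u) (projM y)"
  by (cases sw; simp add: twisted_projM_def projM_def x_forms; simp add: algebra_simps)+
lemma projM_twisted_projM: "projM (twisted_projM sw y) = 3 * twisted_projM sw y"
  and twisted_projM_twice: "twisted_projM sw (twisted_projM sw y) = 3 * projM y"
  by (cases sw; simp add: twisted_projM_def projM_def x_forms distrib_left mult.assoc add.commute)+
lemma dual_form_twisted_projM:
  "K3form w1 (twisted_projM sw v) = (if sw then K3form v x1 else K3form v x2)"
  "K3form w2 (twisted_projM sw v) = (if sw then K3form v x2 else K3form v x1)"
  by (simp_all add: twisted_projM_def projM_def w1 w2)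

lemma glued_K3vecs: "v \<in> K3vecs \<Longrightarrow> glued sw e v \<in> K3vecs"
  unfolding glued_def using twisted_projM_K3vecs N_K3vecs[OF zeta_mem[OF projN_mem_N]] by blast
lemma glued_add: "v \<in> K3vecs \<Longrightarrow> w \<in> K3vecs \<Longrightarrow> glued sw e (v + w) = glued sw e v + glued sw e w"
  by (simp add: glued_def twisted_projM_add projN_add zeta_add[OF projN_mem_N projN_mem_N]
      algebra_simps)

lemma glued_form:
  assumes "e * e = 1" "v \<in> K3vecs" "w \<in> K3vecs"
  shows "K3form (glued sw e v) (glued sw e w)
    = K3form (projM v) (projM w) + K3form (projN v) (projN w)"
proof -
  have "K3form (twisted_projM sw v) (\<zeta> (projN w)) = 0"
    "K3form (\<zeta> (projN v)) (twisted_projM sw w) = 0"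
    "K3form (\<zeta> (projN v)) (\<zeta> (projN w)) = K3form (projN v) (projN w)"
    using twisted_projM_form_N N_form_twisted_projM zeta_mem zeta_form projN_mem_N assms(2,3)
    by blast+
  then show ?thesis
    by (simp add: glued_def twisted_projM_form; simp add: mult.assoc[symmetric] assms(1))
qed

lemma glue_condition_imp_dual_forms_dvd3:
  assumes cond: "glue_condition sw e" and v: "v \<in> K3vecs"
  shows "3 dvd K3form w1 (glued sw e v)" and "3 dvd K3form w2 (glued sw e v)"
proof -
  define a where "a = K3form v x2"
  define b where "b = K3form v x1"
  define t where "t = v - of_int a * w2 - of_int b * w1"
  have t: "t \<in> N" using K3vecs_minus_dual_mem_N[OF v] unfolding t_def a_def b_def .
  have "projN v = of_int a * n2 + of_int b * n1 + 3 * t"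
    by (simp add: projN_def projM_def n1_eq n2_eq t_def a_def b_def algebra_simps)
  then have zeta_projN: "\<zeta> (projN v) = of_int a * \<zeta> n2 + of_int b * \<zeta> n1 + 3 * \<zeta> t"
    using n1_mem_N n2_mem_N t
    by (simp add: zeta_add N.of_int_mult_mem N.add_mem zeta_of_int zeta_numeral
        N.of_int_mult_mem[of _ 3, simplified])
  have "K3form w1 (glued sw e v)
      = (if sw then b * (1 + e * q11) + e * a * q21 else a * (1 + e * q21) + e * b * q11)
        + 3 * (e * K3form w1 (\<zeta> t))"
    "K3form w2 (glued sw e v)
      = (if sw then a * (1 + e * q22) + e * b * q12 else b * (1 + e * q12) + e * a * q22)
        + 3 * (e * K3form w2 (\<zeta> t))"
    using K3form_commute[of w1 "\<zeta> n1"] K3form_commute[of w1 "\<zeta> n2"]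
      K3form_commute[of w2 "\<zeta> n1"] K3form_commute[of w2 "\<zeta> n2"]
    by (simp_all add: glued_def dual_form_twisted_projM zeta_projN q11_def q12_def q21_def q22_def
        a_def b_def; simp add: algebra_simps)+
  then show "3 dvd K3form w1 (glued sw e v)" "3 dvd K3form w2 (glued sw e v)"
    using cond unfolding glue_condition_def by (cases sw; simp)+
qed

lemma glue_condition_imp_integral:
  assumes cond: "glue_condition sw e" and v: "v \<in> K3vecs"
  shows "\<exists>r\<in>K3vecs. glued sw e v = 3 * r"
proof -
  have "3 dvd K3form s (glued sw e v)" if s: "s \<in> N" for s
  proof -
    have "K3form s (glued sw e v) = e * K3form (\<zeta> (projN v)) s"
      by (simp add: glued_def N_form_twisted_projM[OF s] K3form_commute[of s "\<zeta> (projN v)"])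
    then show ?thesis using form_zeta_projN_dvd3[OF v s] by simp
  qed
  then have "\<forall>y\<in>K3vecs. 3 dvd K3form y (glued sw e v)"
    using K3form_dvd_if_dvd_on_duals_and_N glue_condition_imp_dual_forms_dvd3[OF cond v] by blast
  then show ?thesis using K3vecs_dvd_form_imp_multiple[OF glued_K3vecs[OF v], of 3] by simp
qed

end

locale integral_gluing = U3_gluing +
  fixes sw :: bool and e :: int
  assumes sign: "e = 1 \<or> e = -1"
    and integral: "\<And>v. v \<in> K3vecs \<Longrightarrow> \<exists>r\<in>K3vecs. glued sw e v = 3 * r"
begin

abbreviation "g \<equiv> glue_map sw e"

lemma glue_map_triple: "v \<in> K3vecs \<Longrightarrow> 3 * g v = glued sw e v"
  and glue_map_K3vecs: "v \<in> K3vecs \<Longrightarrow> g v \<in> K3vecs"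
proof -
  assume v: "v \<in> K3vecs"
  then obtain r where r: "r \<in> K3vecs" "glued sw e v = 3 * r" using integral by blast
  then have "g v = r" by (simp add: glue_map_def fun_eq_iff)
  then show "3 * g v = glued sw e v" "g v \<in> K3vecs" using r by simp_all
qed

lemma glue_map_add: "v \<in> K3vecs \<Longrightarrow> w \<in> K3vecs \<Longrightarrow> g (v + w) = g v + g w"
  by (rule three_mult_cancel)
    (simp add: glue_map_triple glued_add K3vecs_add distrib_left)

lemma glue_map_form:
  assumes v: "v \<in> K3vecs" and w: "w \<in> K3vecs"
  shows "K3form (g v) (g w) = K3form v w"
proof -
  have "e * e = 1" using sign by auto
  have "9 * K3form (g v) (g w) = K3form (3 * g v) (3 * g w)" by simp
  also have "\<dots> = K3form (3 * v) (3 * w)"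
    using glued_form[OF \<open>e * e = 1\<close> v w] form_triple_split[OF v w]
    by (simp add: glue_map_triple v w)
  finally show ?thesis by simp
qed

lemma glue_map_inj: "inj_on g K3vecs"
proof (rule inj_onI)
  fix v w assume v: "v \<in> K3vecs" and w: "w \<in> K3vecs" and eq: "g v = g w"
  have "g (v - w) = 0" using glue_map_add[OF w K3vecs_diff[OF v w]] eq by simp
  then have "K3form u (v - w) = 0" if "u \<in> K3vecs" for u
    using glue_map_form[OF that K3vecs_diff[OF v w]] by simp
  then show "v = w" using K3form_nondegenerate[OF K3vecs_diff[OF v w]] by auto
qed

lemma glue_map_surj:
  assumes y: "y \<in> K3vecs"
  shows "\<exists>v\<in>K3vecs. g v = y"
proof -
  obtain s where s: "s \<in> N" "\<zeta> s = projN y" using zeta_surj[OF projN_mem_N[OF y]] by blast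
  define u where "u = twisted_projM sw y + of_int e * s"
  have u: "u \<in> K3vecs" unfolding u_def using twisted_projM_K3vecs N_K3vecs[OF s(1)] by blast
  have "3 dvd K3form z u" if z: "z \<in> K3vecs" for z
  proof -
    have "3 * K3form z u = K3form (projM z + projN z) u"
      by (simp flip: triple_eq_projM_projN)
    also have "\<dots> = K3form (projM z) (twisted_projM sw y) + e * K3form (projN z) s"
      unfolding u_def using projM_form_N[OF s(1)] N_form_twisted_projM[OF projN_mem_N[OF z]] by simp
    also have "K3form (projN z) s = K3form (\<zeta> (projN z)) (projN y)"
      using zeta_form[OF projN_mem_N[OF z] s(1)] s(2) by simp
    also have "K3form (projM z) (twisted_projM sw y) + e * K3form (\<zeta> (projN z)) (projN y)
        = K3form (glued sw e z) (projM y + projN y)"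
      using projM_form_twisted_projM[of z sw y] twisted_projM_form_N[OF projN_mem_N[OF y]]
        projM_form_N[OF zeta_mem[OF projN_mem_N[OF z]]] K3form_commute[of "projM y"]
      by (simp add: glued_def N_form_projM[OF zeta_mem[OF projN_mem_N[OF z]]])
    also have "\<dots> = 3 * (3 * K3form (g z) y)"
      by (simp flip: triple_eq_projM_projN glue_map_triple[OF z])
    finally show ?thesis by simp
  qed
  then obtain v where v: "v \<in> K3vecs" "u = 3 * v"
    using K3vecs_dvd_form_imp_multiple[OF u, of 3] by auto
  have twisted: "3 * twisted_projM sw v = 3 * projM y"
    using twisted_projM_of_int[of sw 3 v] twisted_projM_add twisted_projM_of_int
      twisted_projM_N[OF s(1)] twisted_projM_twice
    by (simp add: v(2)[symmetric] u_def)
  have "3 * projN v = projN u" using projN_of_int[of 3 v] v(2) by simp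
  also have "\<dots> = 3 * (of_int e * s)"
    by (simp add: projN_def u_def projM_twisted_projM projM_N[OF s(1)])
  finally have "projN v = of_int e * s" by (rule three_mult_cancel)
  then have "\<zeta> (projN v) = of_int e * projN y" using zeta_of_int[OF s(1)] s(2) by simp
  then have "3 * g v = 3 * y"
    using glue_map_triple[OF v(1)] three_mult_cancel[OF twisted] sign triple_eq_projM_projN[of y]
    by (auto simp: glued_def)
  then show ?thesis using v(1) three_mult_cancel by blast
qed

lemma glue_map_isometry: "is_isometry K3vecs g"
proof -
  have "g ` K3vecs = K3vecs" using glue_map_K3vecs glue_map_surj by (auto simp: image_iff)
  then show ?thesis
    by (simp add: is_isometry_def bij_betw_def glue_map_inj glue_map_add glue_map_form)
qed

lemma glue_map_eta: "g (x1 + x2) = x1 + x2"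
proof (rule three_mult_cancel)
  have "twisted_projM sw (x1 + x2) = 3 * (x1 + x2)"
    by (cases sw; simp add: twisted_projM_def projM_def x_forms distrib_left)
  moreover have "projN (x1 + x2) = 0" by (simp add: projN_def projM_def x_forms distrib_left)
  moreover have "\<zeta> 0 = 0" using zeta_of_int[OF N.zero_mem, of 0] by simp
  ultimately show "3 * g (x1 + x2) = 3 * (x1 + x2)"
    using glue_map_triple[OF K3vecs_add[OF x1 x2]] by (simp add: glued_def)
qed

lemma glue_map_N: "v \<in> N \<Longrightarrow> g v = of_int e * \<zeta> v"
  by (rule three_mult_cancel)
    (simp add: glue_map_triple N_K3vecs glued_def twisted_projM_N projN_def projM_N zeta_numeral
      mult.left_commute)

end

context U3_gluing
begin

lemma extends_or_neg_extends:
  "extends_fixing N (vadd x1 x2) \<zeta> \<or> extends_fixing N (vadd x1 x2) (\<lambda>v. vneg (\<zeta> v))"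
proof -
  obtain e where sign: "e = 1 \<or> e = -1"
    and "3 dvd q11 \<and> 3 dvd q22 \<and> 3 dvd 1 + e * q12 \<and> 3 dvd 1 + e * q21
       \<or> 3 dvd q12 \<and> 3 dvd q21 \<and> 3 dvd 1 + e * q11 \<and> 3 dvd 1 + e * q22"
    using isotropic_isometry_mod3_cases[OF q_constraints] by blast
  then have "glue_condition False e \<or> glue_condition True e"
    unfolding glue_condition_def by simp
  then obtain sw where "glue_condition sw e" by blast
  then interpret integral_gluing x1 x2 \<zeta> sw e
    using sign glue_condition_imp_integral by unfold_locales auto
  have "extends_fixing N (x1 + x2) (\<lambda>v. of_int e * \<zeta> v)"
    unfolding extends_fixing_def using glue_map_isometry glue_map_eta glue_map_N by blast
  then show ?thesis using sign by auto
qed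

end

theorem lemma7p9:
  fixes x1 x2 :: zvec and \<zeta> :: "zvec \<Rightarrow> zvec"
  assumes "x1 \<in> K3vecs" and "x2 \<in> K3vecs"
    and "K3form x1 x1 = 0" and "K3form x2 x2 = 0" and "K3form x1 x2 = 3"
    and "primitive_in_K3 (span2 x1 x2)"
    and "is_isometry (orth2 x1 x2) \<zeta>"
  shows "extends_fixing (orth2 x1 x2) (vadd x1 x2) \<zeta> \<noteq>
         extends_fixing (orth2 x1 x2) (vadd x1 x2) (\<lambda>v. vneg (\<zeta> v))"
proof -
  interpret U3_gluing x1 x2 \<zeta> using assms by unfold_locales
  show ?thesis using extends_or_neg_extends not_both_extend by blast
qed

end
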